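(* Let $Q$ be a convex polytope in $\mathbb{R}^D$ that is not locally point symmetric. Then there is a vertex $\mathbf{v}$ and an edge $E$ of $Q$ such that, for all $\mathbf{e}\in E$, the difference vectors $\mathbf{k} = \mathbf{e}-\mathbf{v}$ and $-\mathbf{k}$ are uniquely formed in $Q-Q$.
   Context: For a set $S\subset\mathbb{R}^D$, a vector $\mathbf{k}\in S-S=\{\mathbf{s}_1-\mathbf{s}_2:\mathbf{s}_1,\mathbf{s}_2\in S\}$ is uniquely formed if there exists a unique pair $\mathbf{s}_1,\mathbf{s}_2\in S$ with $\mathbf{s}_1-\mathbf{s}_2=\mathbf{k}$. Two vertices $\mathbf{u},\mathbf{v}$ of a convex polytope $Q$ are strictly antipodal if there exist parallel supporting hyperplanes $H_1,H_2$ of $Q$ with $H_1\cap Q=\{\mathbf{u}\}$ and $H_2 \cap Q = \{\mathbf{v}\}$. The supporting cone of $Q$ at a vertex $\mathbf{v}$ is $C(\mathbf{v}) = \mathbf{v} + \bigcup_{\lambda \ge 0}\lambda(Q - \mathbf{v})$. A convex polytope $Q$ with $m$ vertices is locally point symmetric if its vertices can be partitioned into $m/2$ pairs of strictly antipodal vertices such that for each pair $\{\mathbf{u},\mathbf{v}\}$, $C(\mathbf{u}) - \mathbf{u} = \mathbf{v} - C(\mathbf{v})$. *)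

theory Defs
  imports "HOL-Analysis.Analysis" "HOL-Library.Disjoint_Sets"
begin

definition vertices :: "'a::euclidean_space set \<Rightarrow> 'a set" where
  "vertices Q = {v. v extreme_point_of Q}"

definition is_edge :: "'a::euclidean_space set \<Rightarrow> 'a set \<Rightarrow> bool" where
  "is_edge Q E \<longleftrightarrow> E face_of Q \<and> aff_dim E = 1"

definition supporting_hyperplane :: "'a::euclidean_space set \<Rightarrow> 'a \<Rightarrow> real \<Rightarrow> bool" where
  "supporting_hyperplane Q a b \<longleftrightarrow> a \<noteq> 0 \<and> {x. a \<bullet> x = b} \<inter> Q \<noteq> {} \<and>
     ((\<forall>x\<in>Q. a \<bullet> x \<le> b) \<or> (\<forall>x\<in>Q. a \<bullet> x \<ge> b))"

definition strictly_antipodal :: "'a::euclidean_space set \<Rightarrow> 'a \<Rightarrow> 'a \<Rightarrow> bool" where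
  "strictly_antipodal Q u v \<longleftrightarrow>
     u \<in> vertices Q \<and> v \<in> vertices Q \<and>
     (\<exists>a b1 b2. supporting_hyperplane Q a b1 \<and> supporting_hyperplane Q a b2 \<and>
        {x. a \<bullet> x = b1} \<inter> Q = {u} \<and> {x. a \<bullet> x = b2} \<inter> Q = {v})"

definition supporting_cone :: "'a::euclidean_space set \<Rightarrow> 'a \<Rightarrow> 'a set" where
  "supporting_cone Q v = {v + l *\<^sub>R (q - v) | l q. l \<ge> 0 \<and> q \<in> Q}"

definition locally_point_symmetric :: "'a::euclidean_space set \<Rightarrow> bool" where
  "locally_point_symmetric Q \<longleftrightarrow>
     (\<exists>P. partition_on (vertices Q) P \<and>
        (\<forall>p\<in>P. \<exists>u v. p = {u, v} \<and> u \<noteq> v \<and> strictly_antipodal Q u v \<and>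
            (\<lambda>c. c - u) ` supporting_cone Q u = (\<lambda>c. v - c) ` supporting_cone Q v))"

definition uniquely_formed :: "'a::ab_group_add set \<Rightarrow> 'a \<Rightarrow> bool" where
  "uniquely_formed S k \<longleftrightarrow> (\<exists>!p. fst p \<in> S \<and> snd p \<in> S \<and> fst p - snd p = k)"

end

theory Submission
  imports Defs
begin

text \<open>If the conclusion fails, take a direction \<open>c\<close> whose minimum over \<open>Q\<close> is attained only
  at a vertex \<open>w\<close>. For every maximizer \<open>e\<close> of \<open>c\<close>, a representation \<open>e - w = x - y\<close> with
  \<open>x, y \<in> Q\<close> forces \<open>c\<close> to be maximal at \<open>x\<close> and minimal at \<open>y\<close>, so \<open>e - w\<close> is uniquely formed;
  hence the face on which \<open>c\<close> is maximal contains no edge, i.e.\ it is a single vertex. So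
  directions exposing a vertex \<open>u\<close> also expose a vertex at the opposite side, and as the
  directions exposing \<open>u\<close> form a convex (hence connected) set and there are only finitely many
  vertices, this opposite vertex is the same for all of them. The resulting involution pairs
  strictly antipodal vertices, and a separation argument shows that the supporting cones of
  paired vertices are point reflections of each other: \<open>Q\<close> is locally point symmetric.\<close>

definition maximizers :: "'a::real_inner set \<Rightarrow> 'a \<Rightarrow> 'a set" where
  "maximizers Q a = {x\<in>Q. \<forall>y\<in>Q. a \<bullet> y \<le> a \<bullet> x}"

lemma maximizers_eq_Int_hyperplane:
  "x \<in> maximizers Q a \<Longrightarrow> maximizers Q a = Q \<inter> {y. a \<bullet> y = a \<bullet> x}"
  unfolding maximizers_def by (auto intro: order_antisym)

lemma face_of_maximizers:
  assumes "convex Q"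
  shows "maximizers Q a face_of Q"
proof (cases "maximizers Q a = {}")
  case False
  then obtain x where x: "x \<in> maximizers Q a" by blast
  then have "\<And>y. y \<in> Q \<Longrightarrow> a \<bullet> y \<le> a \<bullet> x" by (auto simp: maximizers_def)
  then show ?thesis
    unfolding maximizers_eq_Int_hyperplane[OF x]
    using face_of_Int_supporting_hyperplane_le[OF assms] by blast
qed simp

lemma maximizers_nonempty:
  fixes Q :: "'a::euclidean_space set"
  assumes "compact Q" "Q \<noteq> {}"
  shows "maximizers Q a \<noteq> {}"
proof -
  have "continuous_on Q (\<lambda>x. a \<bullet> x)"
    by (intro continuous_intros)
  then show ?thesis
    using continuous_attains_sup[OF assms] by (auto simp: maximizers_def)
qed

lemma maximizers_singleton_iff:
  "maximizers Q a = {u} \<longleftrightarrow> u \<in> Q \<and> (\<forall>x\<in>Q. x \<noteq> u \<longrightarrow> a \<bullet> x < a \<bullet> u)"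
proof
  assume u: "maximizers Q a = {u}"
  then have "u \<in> Q" "\<And>x. x \<in> Q \<Longrightarrow> a \<bullet> x \<le> a \<bullet> u"
    by (auto simp: maximizers_def)
  moreover have "x \<in> maximizers Q a" if "x \<in> Q" "a \<bullet> x = a \<bullet> u" for x
    using that calculation by (auto simp: maximizers_def)
  ultimately show "u \<in> Q \<and> (\<forall>x\<in>Q. x \<noteq> u \<longrightarrow> a \<bullet> x < a \<bullet> u)"
    using u by (metis order_less_le singletonD)
next
  assume "u \<in> Q \<and> (\<forall>x\<in>Q. x \<noteq> u \<longrightarrow> a \<bullet> x < a \<bullet> u)"
  then show "maximizers Q a = {u}"
    unfolding maximizers_def by (auto intro: order.strict_implies_order) (use leD in blast)
qed

lemma maximizers_zero: "maximizers Q 0 = Q"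
  by (simp add: maximizers_def)

lemma vertex_if_maximizers_singleton:
  assumes "convex Q" "maximizers Q a = {u}"
  shows "u \<in> vertices Q"
  using face_of_maximizers[OF assms(1), of a] assms(2)
  by (simp add: vertices_def face_of_singleton)

lemma vertices_subset: "vertices Q \<subseteq> Q"
  by (auto simp: vertices_def extreme_point_of_def)

lemma vertex_exposed:
  fixes Q :: "'a::euclidean_space set"
  assumes "polytope Q" "u \<in> vertices Q"
  obtains a where "maximizers Q a = {u}"
proof -
  have "{u} face_of Q"
    using assms(2) by (simp add: vertices_def face_of_singleton)
  then have "{u} exposed_face_of Q"
    using exposed_face_of_polyhedron[OF polytope_imp_polyhedron[OF assms(1)]] by blast
  then obtain a b where le: "Q \<subseteq> {x. a \<bullet> x \<le> b}" and eq: "{u} = Q \<inter> {x. a \<bullet> x = b}"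
    unfolding exposed_face_of_def by blast
  then have "u \<in> Q" "a \<bullet> u = b"
    by auto
  with le eq have "maximizers Q a = {u}"
    unfolding maximizers_singleton_iff by (auto simp: order_less_le)
  then show thesis ..
qed

lemma finite_vertices:
  fixes Q :: "'a::euclidean_space set"
  shows "polytope Q \<Longrightarrow> finite (vertices Q)"
  by (simp add: vertices_def finite_polyhedron_extreme_points polytope_imp_polyhedron)

lemma uniquely_formed_maximizer_minus_minimizer:
  assumes e: "e \<in> maximizers Q c" and w: "maximizers Q (-c) = {w}"
  shows "uniquely_formed Q (e - w) \<and> uniquely_formed Q (- (e - w))"
proof -
  have eQ: "e \<in> Q" and e_max: "\<And>y. y \<in> Q \<Longrightarrow> c \<bullet> y \<le> c \<bullet> e"
    using e by (auto simp: maximizers_def)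
  have wQ: "w \<in> Q" and w_min: "\<And>y. y \<in> Q \<Longrightarrow> y \<noteq> w \<Longrightarrow> c \<bullet> w < c \<bullet> y"
    using w by (auto simp: maximizers_singleton_iff)
  have unique: "x = e \<and> y = w" if "x \<in> Q" "y \<in> Q" "x - y = e - w" for x y
  proof -
    have "c \<bullet> x - c \<bullet> y = c \<bullet> e - c \<bullet> w"
      using that(3) by (metis inner_diff_right)
    then have "y = w"
      using e_max[OF that(1)] w_min[OF that(2)] by fastforce
    then show ?thesis
      using that(3) by simp
  qed
  show ?thesis
    unfolding uniquely_formed_def
  proof
    show "\<exists>!p. fst p \<in> Q \<and> snd p \<in> Q \<and> fst p - snd p = e - w"
      by (rule ex1I[of _ "(e, w)"]) (use eQ wQ unique in auto)
    show "\<exists>!p. fst p \<in> Q \<and> snd p \<in> Q \<and> fst p - snd p = - (e - w)"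
      by (rule ex1I[of _ "(w, e)"]) (use eQ wQ unique in \<open>auto simp: algebra_simps\<close>)
  qed
qed

lemma polytope_edge_exists:
  fixes P :: "'a::euclidean_space set"
  assumes "polytope P" "1 \<le> aff_dim P"
  shows "\<exists>E. E edge_of P"
  using assms
proof (induction "nat (aff_dim P)" arbitrary: P rule: less_induct)
  case (less P)
  show ?case
  proof (cases "aff_dim P = 1")
    case True
    then have "P edge_of P"
      using less.prems(1) by (simp add: edge_of_def face_of_refl polytope_imp_convex)
    then show ?thesis ..
  next
    case False
    obtain F where F: "F facet_of P"
      using polytope_facet_exists[OF less.prems(1)] less.prems(2) by auto
    have "polytope F"
      using F face_of_polytope_polytope facet_of_imp_face_of less.prems(1) by blast
    have "aff_dim F = aff_dim P - 1"
      using F by (simp add: facet_of_def)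
    then have "nat (aff_dim F) < nat (aff_dim P)" "1 \<le> aff_dim F"
      using False less.prems(2) by auto
    then obtain E where E: "E edge_of F"
      using less.hyps \<open>polytope F\<close> by blast
    have "E edge_of P"
      using E F face_of_trans unfolding edge_of_def facet_of_def by blast
    then show ?thesis ..
  qed
qed

lemma edge_in_maximizers:
  fixes Q :: "'a::euclidean_space set"
  assumes "polytope Q" "Q \<noteq> {}" "\<nexists>z. maximizers Q c = {z}"
  obtains E where "E edge_of Q" "E \<subseteq> maximizers Q c"
proof -
  have face: "maximizers Q c face_of Q"
    using assms(1) by (simp add: face_of_maximizers polytope_imp_convex)
  have "maximizers Q c \<noteq> {}"
    using assms by (simp add: maximizers_nonempty polytope_imp_compact)
  then have "aff_dim (maximizers Q c) \<noteq> -1" "aff_dim (maximizers Q c) \<noteq> 0"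
    using assms(3) by (simp_all add: aff_dim_eq_0 aff_dim_empty)
  then have "1 \<le> aff_dim (maximizers Q c)"
    using aff_dim_geq[of "maximizers Q c"] by linarith
  then obtain E where "E edge_of maximizers Q c"
    using polytope_edge_exists face_of_polytope_polytope[OF assms(1) face] by blast
  then show thesis
    using face that unfolding edge_of_def by (meson face_of_imp_subset face_of_trans)
qed

lemma maximizers_add_scaled:
  assumes "u \<in> maximizers Q a" "maximizers Q b = {u}" "0 \<le> s" "0 < t"
  shows "maximizers Q (s *\<^sub>R a + t *\<^sub>R b) = {u}"
  unfolding maximizers_singleton_iff
proof (intro conjI ballI impI)
  show "u \<in> Q"
    using assms(2) by (simp add: maximizers_singleton_iff)
  fix x assume "x \<in> Q" "x \<noteq> u"
  then have "a \<bullet> x \<le> a \<bullet> u" "b \<bullet> x < b \<bullet> u"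
    using assms(1,2) unfolding maximizers_singleton_iff by (auto simp: maximizers_def)
  then have "s * (a \<bullet> x) + t * (b \<bullet> x) < s * (a \<bullet> u) + t * (b \<bullet> u)"
    using assms(3,4) by (intro add_le_less_mono mult_left_mono mult_strict_left_mono)
  then show "(s *\<^sub>R a + t *\<^sub>R b) \<bullet> x < (s *\<^sub>R a + t *\<^sub>R b) \<bullet> u"
    by (simp add: inner_add_left)
qed

lemma maximizers_convex_combination:
  assumes "maximizers Q a = {u}" "maximizers Q b = {u}" "t \<in> {0..1}"
  shows "maximizers Q ((1 - t) *\<^sub>R a + t *\<^sub>R b) = {u}"
proof (cases "t = 0")
  case False
  then show ?thesis
    using assms maximizers_add_scaled[of u Q a b "1 - t" t] by simp
qed (use assms in simp)

lemma maximizers_uminus_singleton_same: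
  assumes "maximizers Q a = {u}" "maximizers Q (-a) = {u}"
  shows "Q = {u}"
  using assms unfolding maximizers_singleton_iff by force

lemma strictly_antipodal_if_maximizers:
  assumes "convex Q" "maximizers Q a = {u}" "maximizers Q (-a) = {v}" "u \<noteq> v"
  shows "strictly_antipodal Q u v"
proof -
  have "a \<noteq> 0"
    using assms(2-4) by (auto simp: maximizers_zero)
  have "\<forall>x\<in>Q. a \<bullet> x \<le> a \<bullet> u" "\<forall>x\<in>Q. a \<bullet> v \<le> a \<bullet> x"
    using assms(2,3) by (auto simp: maximizers_def)
  moreover have touch: "{x. a \<bullet> x = a \<bullet> u} \<inter> Q = {u}" "{x. a \<bullet> x = a \<bullet> v} \<inter> Q = {v}"
    using maximizers_eq_Int_hyperplane[of u Q a] maximizers_eq_Int_hyperplane[of v Q "-a"] assms(2,3)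
    by auto
  ultimately have "supporting_hyperplane Q a (a \<bullet> u)" "supporting_hyperplane Q a (a \<bullet> v)"
    using \<open>a \<noteq> 0\<close> unfolding supporting_hyperplane_def by blast+
  with touch show ?thesis
    unfolding strictly_antipodal_def
    using vertex_if_maximizers_singleton[OF assms(1)] assms(2,3) by blast
qed

lemma separating_hyperplane_closed_cone:
  fixes K :: "'a::euclidean_space set"
  assumes "conic K" "convex K" "closed K" "K \<noteq> {}" "d \<notin> K"
  obtains a where "a \<bullet> d < 0" "\<And>x. x \<in> K \<Longrightarrow> 0 \<le> a \<bullet> x"
proof -
  obtain a \<beta> where sep: "a \<bullet> d < \<beta>" "\<And>x. x \<in> K \<Longrightarrow> \<beta> < a \<bullet> x"
    using separating_hyperplane_closed_point[OF assms(2,3,5)] by blast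
  have "\<beta> < 0"
    using sep(2)[of 0] assms(1,4) by (simp add: conic_contains_0)
  have "0 \<le> a \<bullet> x" if "x \<in> K" for x
  proof (rule ccontr)
    assume "\<not> 0 \<le> a \<bullet> x"
    then have "(\<beta> / (a \<bullet> x)) *\<^sub>R x \<in> K"
      using \<open>\<beta> < 0\<close> assms(1) that by (intro conic_mul) (auto simp: divide_nonpos_neg)
    then show False
      using sep(2) \<open>\<not> 0 \<le> a \<bullet> x\<close> by fastforce
  qed
  with sep(1) \<open>\<beta> < 0\<close> show thesis
    by (intro that) auto
qed

lemma shifted_supporting_cone:
  "(\<lambda>c. c - u) ` supporting_cone Q u = conic hull ((\<lambda>q. q - u) ` Q)"
  unfolding supporting_cone_def conic_hull_explicit by force

lemma reflected_supporting_cone: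
  "(\<lambda>c. v - c) ` supporting_cone Q v = uminus ` (conic hull ((\<lambda>q. q - v) ` Q))"
  unfolding shifted_supporting_cone[symmetric] image_image by simp

lemma partition_on_involution_pairs:
  assumes "\<And>u. u \<in> V \<Longrightarrow> \<sigma> u \<in> V" "\<And>u. u \<in> V \<Longrightarrow> \<sigma> (\<sigma> u) = u"
  shows "partition_on V ((\<lambda>u. {u, \<sigma> u}) ` V)"
  unfolding partition_on_def disjoint_def
proof (intro conjI ballI impI)
  show "\<Union> ((\<lambda>u. {u, \<sigma> u}) ` V) = V"
    using assms(1) by auto
  show "{} \<notin> (\<lambda>u. {u, \<sigma> u}) ` V"
    by auto
  fix p p' assume "p \<in> (\<lambda>u. {u, \<sigma> u}) ` V" "p' \<in> (\<lambda>u. {u, \<sigma> u}) ` V" "p \<noteq> p'"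
  then show "p \<inter> p' = {}"
    using assms(2) by (auto simp: insert_commute) metis+
qed

lemma connected_subset_of_finite_closed_partition:
  assumes "connected S" "finite I" "\<And>i. i \<in> I \<Longrightarrow> closed (F i)" "S \<subseteq> (\<Union>i\<in>I. F i)"
    and "\<And>i j. i \<in> I \<Longrightarrow> j \<in> I \<Longrightarrow> i \<noteq> j \<Longrightarrow> F i \<inter> F j \<inter> S = {}"
    and "i \<in> I" "x \<in> S" "x \<in> F i"
  shows "S \<subseteq> F i"
proof -
  define B where "B = (\<Union>j\<in>I - {i}. F j)"
  have "F i \<inter> B \<inter> S = {}"
    using assms(5,6) unfolding B_def by blast
  moreover have "S \<subseteq> F i \<union> B"
    using assms(4) unfolding B_def by blast
  moreover have "closed B"
    unfolding B_def using assms(2,3) by (intro closed_UN) auto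
  ultimately have "F i \<inter> S = {} \<or> B \<inter> S = {}"
    using connected_closedD[OF assms(1)] assms(3,6) by blast
  then show ?thesis
    using \<open>S \<subseteq> F i \<union> B\<close> assms(7,8) by blast
qed

lemma closed_minimizing_parameters:
  fixes c :: "real \<Rightarrow> 'a::real_inner"
  assumes "continuous_on UNIV c"
  shows "closed {t. \<forall>y\<in>Q. c t \<bullet> w \<le> c t \<bullet> y}"
proof -
  have "{t. \<forall>y\<in>Q. c t \<bullet> w \<le> c t \<bullet> y} = (\<Inter>y\<in>Q. {t. c t \<bullet> w \<le> c t \<bullet> y})"
    by auto
  moreover have "closed {t. c t \<bullet> w \<le> c t \<bullet> y}" for y
    using assms by (intro closed_Collect_le continuous_intros) (auto simp: continuous_on_eq_continuous_at)
  ultimately show ?thesis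
    by auto
qed

text \<open>Tilting \<open>a\<close> slightly towards \<open>-b\<close> makes \<open>v\<close> its unique maximizer, so by hypothesis \<open>u\<close>
  minimizes the tilted functional; letting the tilt go to zero, \<open>u\<close> minimizes \<open>a\<close>.\<close>

lemma minimizer_of_tilted_maximizer:
  assumes v: "maximizers Q (-b) = {v}"
    and opposite: "\<And>c. maximizers Q (-c) = {v} \<Longrightarrow> maximizers Q c = {u}"
    and a: "v \<in> maximizers Q a"
  shows "u \<in> maximizers Q (-a)"
proof -
  have "u \<in> Q"
    using opposite[OF v] by (simp add: maximizers_singleton_iff)
  have "0 \<le> a \<bullet> (q - u)" if q: "q \<in> Q" for q
  proof (rule ccontr)
    define \<delta> where "\<delta> = - (a \<bullet> (q - u))"
    define \<epsilon> where "\<epsilon> = \<delta> / (\<bar>b \<bullet> (q - u)\<bar> + 1)"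
    assume "\<not> 0 \<le> a \<bullet> (q - u)"
    then have "\<epsilon> > 0"
      by (simp add: \<delta>_def \<epsilon>_def divide_neg_pos add_pos_nonneg)
    have "\<epsilon> * \<bar>b \<bullet> (q - u)\<bar> < \<epsilon> * (\<bar>b \<bullet> (q - u)\<bar> + 1)"
      using \<open>\<epsilon> > 0\<close> by simp
    also have "\<dots> = \<delta>"
      by (simp add: \<epsilon>_def)
    finally have small: "\<epsilon> * \<bar>b \<bullet> (q - u)\<bar> < \<delta>" .
    have "maximizers Q (1 *\<^sub>R a + \<epsilon> *\<^sub>R (-b)) = {v}"
      using maximizers_add_scaled[OF a v, of 1 \<epsilon>] \<open>\<epsilon> > 0\<close> by simp
    then have "maximizers Q (\<epsilon> *\<^sub>R b - a) = {u}"
      by (intro opposite) (simp add: algebra_simps)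
    then have "(\<epsilon> *\<^sub>R b - a) \<bullet> (q - u) \<le> 0"
      using q by (auto simp: maximizers_def inner_diff_right)
    then have "\<delta> \<le> \<epsilon> * - (b \<bullet> (q - u))"
      by (simp add: \<delta>_def inner_diff_left)
    also have "\<dots> \<le> \<epsilon> * \<bar>b \<bullet> (q - u)\<bar>"
      using \<open>\<epsilon> > 0\<close> by (intro mult_left_mono) auto
    finally show False
      using small by simp
  qed
  with \<open>u \<in> Q\<close> show ?thesis
    by (auto simp: maximizers_def inner_diff_right)
qed

lemma conic_hull_shift_subset_reflected_cone:
  fixes Q :: "'a::euclidean_space set"
  assumes "polytope Q" "maximizers Q (-b) = {v}"
    and opposite: "\<And>c. maximizers Q (-c) = {v} \<Longrightarrow> maximizers Q c = {u}"
  shows "conic hull ((\<lambda>q. q - u) ` Q) \<subseteq> uminus ` (conic hull ((\<lambda>q. q - v) ` Q))"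
proof -
  define K where "K = conic hull ((\<lambda>q. v - q) ` Q)"
  have K_eq: "uminus ` (conic hull ((\<lambda>q. q - v) ` Q)) = K"
    unfolding K_def conic_hull_linear_image[OF linear_uminus, symmetric] image_image by simp
  have "(\<lambda>q. v - q) ` Q = (+) v ` (uminus ` Q)"
    by (simp add: image_image)
  then have "polytope ((\<lambda>q. v - q) ` Q)"
    using polytope_linear_image[OF linear_uminus assms(1)] polytope_translation_eq[of v] by simp
  then have "convex K" "closed K"
    unfolding K_def by (simp_all add: convex_conic_hull polytope_imp_convex closed_conic_hull_strong)
  have "v \<in> Q"
    using assms(2) by (simp add: maximizers_singleton_iff)
  then have "conic K" "K \<noteq> {}"
    by (auto simp: K_def conic_conic_hull conic_hull_eq_empty)
  have "q - u \<in> K" if "q \<in> Q" for q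
  proof (rule ccontr)
    assume "q - u \<notin> K"
    then obtain a where a: "a \<bullet> (q - u) < 0" "\<And>x. x \<in> K \<Longrightarrow> 0 \<le> a \<bullet> x"
      using separating_hyperplane_closed_cone \<open>conic K\<close> \<open>convex K\<close> \<open>closed K\<close> \<open>K \<noteq> {}\<close>
      by blast
    have "a \<bullet> (v - y) \<ge> 0" if "y \<in> Q" for y
      using a(2) that unfolding K_def by (simp add: hull_inc)
    then have "v \<in> maximizers Q a"
      using \<open>v \<in> Q\<close> by (auto simp: maximizers_def inner_diff_right)
    then have "u \<in> maximizers Q (-a)"
      using minimizer_of_tilted_maximizer[OF assms(2) opposite] by blast
    with a(1) that show False
      by (auto simp: maximizers_def inner_diff_right)
  qed
  then show ?thesis
    unfolding K_eq using \<open>conic K\<close> by (intro hull_minimal) auto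
qed

lemma uniquely_formed_edge_if_maximizer_not_unique:
  fixes Q :: "'a::euclidean_space set"
  assumes "polytope Q" "Q \<noteq> {}" and w: "maximizers Q (-c) = {w}"
    and "\<nexists>z. maximizers Q c = {z}"
  shows "\<exists>v E. v \<in> vertices Q \<and> is_edge Q E \<and>
           (\<forall>e\<in>E. uniquely_formed Q (e - v) \<and> uniquely_formed Q (- (e - v)))"
proof -
  obtain E where "E edge_of Q" "E \<subseteq> maximizers Q c"
    using edge_in_maximizers[OF assms(1,2,4)] .
  moreover have "w \<in> vertices Q"
    using vertex_if_maximizers_singleton[OF polytope_imp_convex[OF assms(1)] w] .
  ultimately show ?thesis
    using uniquely_formed_maximizer_minus_minimizer[OF _ w]
    unfolding is_edge_def edge_of_def[symmetric] by blast
qed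

text \<open>By the previous lemma, the negated conclusion of the theorem yields \<open>unique_max\<close>.\<close>

locale unique_max_of_unique_min =
  fixes Q :: "'a::euclidean_space set"
  assumes polytope: "polytope Q"
    and unique_max: "maximizers Q (-c) = {w} \<Longrightarrow> \<exists>z. maximizers Q c = {z}"
begin

text \<open>The directions exposing \<open>u\<close> form a convex set, along whose segments the unique minimizer
  can only take finitely many values, each on a closed set of parameters; by connectedness it
  is constant.\<close>

lemma opposite_constant:
  assumes a: "maximizers Q a = {u}" and b: "maximizers Q b = {u}" and w: "maximizers Q (-a) = {w}"
  shows "maximizers Q (-b) = {w}"
proof -
  define c where "c t = (1 - t) *\<^sub>R a + t *\<^sub>R b" for t :: real
  have "\<exists>z. maximizers Q (- c t) = {z}" if "t \<in> {0..1}" for t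
    using unique_max[of "- c t" u] maximizers_convex_combination[OF a b that]
    unfolding c_def minus_minus by blast
  then obtain opp where opp: "\<And>t. t \<in> {0..1} \<Longrightarrow> maximizers Q (- c t) = {opp t}"
    by metis
  define F where "F x = {t. \<forall>y\<in>Q. c t \<bullet> x \<le> c t \<bullet> y}" for x
  have F_iff: "t \<in> F x \<longleftrightarrow> opp t = x" if "t \<in> {0..1}" "x \<in> Q" for t x
  proof -
    have "t \<in> F x \<longleftrightarrow> x \<in> maximizers Q (- c t)"
      using that(2) by (simp add: F_def maximizers_def)
    then show ?thesis
      using opp[OF that(1)] by auto
  qed
  have opp_vertex: "opp t \<in> vertices Q" if "t \<in> {0..1}" for t
    using vertex_if_maximizers_singleton[OF polytope_imp_convex[OF polytope] opp[OF that]] .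
  have "{0..1} \<subseteq> F w"
  proof (rule connected_subset_of_finite_closed_partition[of _ "vertices Q"])
    show "closed (F x)" for x
      unfolding F_def c_def by (intro closed_minimizing_parameters continuous_intros)
    show "{0..1} \<subseteq> (\<Union>x\<in>vertices Q. F x)"
      using F_iff opp_vertex vertices_subset by blast
    show "F x \<inter> F y \<inter> {0..1} = {}" if "x \<in> vertices Q" "y \<in> vertices Q" "x \<noteq> y" for x y
      using F_iff that vertices_subset by blast
    show "w \<in> vertices Q"
      using vertex_if_maximizers_singleton[OF polytope_imp_convex[OF polytope] w] .
    show "0 \<in> F w"
      using w unfolding F_def c_def maximizers_singleton_iff by (auto intro: less_imp_le)
  qed (use polytope finite_vertices in auto)
  then have "1 \<in> F w"
    by (rule subsetD) simp
  then have "opp 1 = w"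
    using F_iff[of 1 w] w by (simp add: maximizers_singleton_iff)
  then show ?thesis
    using opp[of 1] by (simp add: c_def)
qed

definition opposite :: "'a \<Rightarrow> 'a" where
  "opposite u = (THE w. \<exists>a. maximizers Q a = {u} \<and> maximizers Q (-a) = {w})"

lemma maximizers_uminus_opposite:
  assumes "maximizers Q a = {u}"
  shows "maximizers Q (-a) = {opposite u}"
proof -
  obtain w where w: "maximizers Q (-a) = {w}"
    using unique_max[of "-a" u] assms by auto
  have "opposite u = w"
    unfolding opposite_def
  proof (rule the_equality)
    show "\<exists>a. maximizers Q a = {u} \<and> maximizers Q (-a) = {w}"
      using assms w by blast
  next
    fix w' assume "\<exists>a. maximizers Q a = {u} \<and> maximizers Q (-a) = {w'}"
    then show "w' = w"
      using opposite_constant[OF _ assms] w by force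
  qed
  with w show ?thesis
    by simp
qed

lemma opposite_in_vertices:
  assumes "u \<in> vertices Q"
  shows "opposite u \<in> vertices Q"
proof -
  obtain a where a: "maximizers Q a = {u}"
    using vertex_exposed[OF polytope assms] .
  show ?thesis
    using vertex_if_maximizers_singleton[OF polytope_imp_convex[OF polytope]
        maximizers_uminus_opposite[OF a]] .
qed

lemma opposite_opposite:
  assumes "u \<in> vertices Q"
  shows "opposite (opposite u) = u"
proof -
  obtain a where a: "maximizers Q a = {u}"
    using vertex_exposed[OF polytope assms] .
  then have "maximizers Q (- (-a)) = {opposite (opposite u)}"
    by (intro maximizers_uminus_opposite)
  with a show ?thesis
    by simp
qed

lemma opposite_neq:
  assumes "\<exists>x\<in>Q. \<exists>y\<in>Q. x \<noteq> y" "u \<in> vertices Q"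
  shows "opposite u \<noteq> u"
proof
  assume "opposite u = u"
  obtain a where a: "maximizers Q a = {u}"
    using vertex_exposed[OF polytope assms(2)] .
  then have "Q = {u}"
    using maximizers_uminus_singleton_same[OF a] maximizers_uminus_opposite[OF a] \<open>opposite u = u\<close>
    by simp
  with assms(1) show False
    by blast
qed

lemma strictly_antipodal_opposite:
  assumes "\<exists>x\<in>Q. \<exists>y\<in>Q. x \<noteq> y" "u \<in> vertices Q"
  shows "strictly_antipodal Q u (opposite u)"
proof -
  obtain a where a: "maximizers Q a = {u}"
    using vertex_exposed[OF polytope assms(2)] .
  show ?thesis
    using strictly_antipodal_if_maximizers[OF polytope_imp_convex[OF polytope] a
        maximizers_uminus_opposite[OF a]] opposite_neq[OF assms] by (simp add: eq_commute)
qed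

lemma supporting_cone_opposite:
  assumes "u \<in> vertices Q"
  shows "(\<lambda>c. c - u) ` supporting_cone Q u
    = (\<lambda>c. opposite u - c) ` supporting_cone Q (opposite u)"
proof -
  define v where "v = opposite u"
  define L where "L x = conic hull ((\<lambda>q. q - x) ` Q)" for x
  obtain a where a: "maximizers Q a = {u}"
    using vertex_exposed[OF polytope assms] .
  have "L u \<subseteq> uminus ` L v"
    unfolding L_def
  proof (rule conic_hull_shift_subset_reflected_cone[OF polytope])
    show "maximizers Q (-a) = {v}"
      using a by (simp add: v_def maximizers_uminus_opposite)
    show "maximizers Q c = {u}" if "maximizers Q (-c) = {v}" for c
      using maximizers_uminus_opposite[OF that] opposite_opposite[OF assms] by (simp add: v_def)
  qed
  moreover have "L v \<subseteq> uminus ` L u"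
    unfolding L_def
  proof (rule conic_hull_shift_subset_reflected_cone[OF polytope])
    show "maximizers Q (- (-a)) = {u}"
      using a by simp
    show "maximizers Q c = {v}" if "maximizers Q (-c) = {u}" for c
      using maximizers_uminus_opposite[OF that] by (simp add: v_def)
  qed
  then have "uminus ` L v \<subseteq> L u"
    by (auto simp: image_iff)
  ultimately have "L u = uminus ` L v"
    by (rule equalityI)
  then show ?thesis
    by (simp add: shifted_supporting_cone reflected_supporting_cone L_def v_def)
qed

theorem locally_point_symmetric:
  assumes "\<exists>x\<in>Q. \<exists>y\<in>Q. x \<noteq> y"
  shows "locally_point_symmetric Q"
  unfolding locally_point_symmetric_def
proof (intro exI[of _ "(\<lambda>u. {u, opposite u}) ` vertices Q"] conjI ballI)
  show "partition_on (vertices Q) ((\<lambda>u. {u, opposite u}) ` vertices Q)"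
    by (rule partition_on_involution_pairs) (simp_all add: opposite_in_vertices opposite_opposite)
next
  fix p assume "p \<in> (\<lambda>u. {u, opposite u}) ` vertices Q"
  then obtain u where u: "u \<in> vertices Q" "p = {u, opposite u}"
    by blast
  moreover have "u \<noteq> opposite u"
    using opposite_neq[OF assms u(1)] by simp
  ultimately show "\<exists>u v. p = {u, v} \<and> u \<noteq> v \<and> strictly_antipodal Q u v \<and>
      (\<lambda>c. c - u) ` supporting_cone Q u = (\<lambda>c. v - c) ` supporting_cone Q v"
    using strictly_antipodal_opposite[OF assms u(1)] supporting_cone_opposite[OF u(1)]
    by (intro exI[of _ u] exI[of _ "opposite u"] conjI)
qed

end

theorem lemma7:
  fixes Q :: "'a::euclidean_space set"
  assumes "polytope Q"
    and "\<exists>x\<in>Q. \<exists>y\<in>Q. x \<noteq> y"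
    and "\<not> locally_point_symmetric Q"
  shows "\<exists>v E. v \<in> vertices Q \<and> is_edge Q E \<and>
           (\<forall>e\<in>E. uniquely_formed Q (e - v) \<and> uniquely_formed Q (- (e - v)))"
proof (rule ccontr)
  assume no_witness: "\<not> ?thesis"
  have "Q \<noteq> {}"
    using assms(2) by blast
  have "unique_max_of_unique_min Q"
    using assms(1) uniquely_formed_edge_if_maximizer_not_unique[OF assms(1) \<open>Q \<noteq> {}\<close>] no_witness
    by unfold_locales blast+
  then show False
    using unique_max_of_unique_min.locally_point_symmetric assms(2,3) by blast
qed

end
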